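(* Let $D$ be an Eulerian digraph (finite, without loops, parallel arcs or digons) which admits at least one simple dicycle intersection graph. Then $$\sum_{v\in V(D)}|N^{+2}(v)|\;\geq\;\sum_{v\in V(D)}|N^{+}(v)|.$$
   Context: All digraphs are finite, with no loops, no parallel arcs and no digons (a digon is a pair of arcs $u\to w$, $w\to u$). $N^{+}(v)$ is the set of out-neighbours of $v$; $N^{+2}(v)$ is the set of vertices $w\notin N^{+}(v)\cup\{v\}$ such that $u\to w$ is an arc for some $u\in N^{+}(v)$. An Eulerian digraph is a (weakly) connected digraph with a closed directed trail using every arc exactly once; equivalently a connected digraph with $d^{+}(v)=d^{-}(v)$ for all $v$. A cycle decomposition is a set of dicycles whose arc sets partition $A(D)$. The dicycle intersection graph associated with a cycle decomposition $\mathcal{F}$ is the multigraph with vertex set $\mathcal{F}$ having, for each pair of distinct dicycles $C,C'\in\mathcal{F}$ and each vertex lying on both, one edge between $C$ and $C'$. $D$ admits a simple dicycle intersection graph if for some cycle decomposition this multigraph has no parallel edges (equivalently, any two distinct dicycles of the decomposition share at most one vertex). *)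

theory Defs
  imports Main
begin

text \<open>It is a (simple) digraph in the paper's sense: finite, no loops, no digons
  (parallel arcs are impossible with an arc set).\<close>

definition digraph :: "'a set \<Rightarrow> ('a \<times> 'a) set \<Rightarrow> bool" where
  "digraph V A \<longleftrightarrow> finite V \<and> A \<subseteq> V \<times> V \<and>
     (\<forall>v. (v, v) \<notin> A) \<and> (\<forall>u w. (u, w) \<in> A \<longrightarrow> (w, u) \<notin> A)"

definition out_nbrs :: "('a \<times> 'a) set \<Rightarrow> 'a \<Rightarrow> 'a set" where
  "out_nbrs A v = {w. (v, w) \<in> A}"

definition in_nbrs :: "('a \<times> 'a) set \<Rightarrow> 'a \<Rightarrow> 'a set" where
  "in_nbrs A v = {u. (u, v) \<in> A}"

definition second_out_nbrs :: "('a \<times> 'a) set \<Rightarrow> 'a \<Rightarrow> 'a set" where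
  "second_out_nbrs A v =
     {w. w \<notin> out_nbrs A v \<and> w \<noteq> v \<and> (\<exists>u \<in> out_nbrs A v. (u, w) \<in> A)}"

definition weakly_connected :: "'a set \<Rightarrow> ('a \<times> 'a) set \<Rightarrow> bool" where
  "weakly_connected V A \<longleftrightarrow> (\<forall>u \<in> V. \<forall>w \<in> V. (u, w) \<in> (A \<union> A\<inverse>)\<^sup>*)"

definition eulerian :: "'a set \<Rightarrow> ('a \<times> 'a) set \<Rightarrow> bool" where
  "eulerian V A \<longleftrightarrow> weakly_connected V A \<and>
     (\<forall>v \<in> V. card (out_nbrs A v) = card (in_nbrs A v))"

text \<open>A dicycle, identified with its arc set: the arcs of a closed walk
  through a list of distinct vertices (length at least 2).\<close>
definition dicycle_arcs :: "'a list \<Rightarrow> ('a \<times> 'a) set" where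
  "dicycle_arcs vs = {(vs ! i, vs ! ((i + 1) mod length vs)) | i. i < length vs}"

definition is_dicycle :: "('a \<times> 'a) set \<Rightarrow> ('a \<times> 'a) set \<Rightarrow> bool" where
  "is_dicycle A C \<longleftrightarrow> (\<exists>vs. distinct vs \<and> length vs \<ge> 2 \<and> C = dicycle_arcs vs) \<and> C \<subseteq> A"

definition arc_verts :: "('a \<times> 'a) set \<Rightarrow> 'a set" where
  "arc_verts C = fst ` C \<union> snd ` C"

definition cycle_decomposition :: "('a \<times> 'a) set \<Rightarrow> ('a \<times> 'a) set set \<Rightarrow> bool" where
  "cycle_decomposition A F \<longleftrightarrow> (\<forall>C \<in> F. is_dicycle A C) \<and>
     (\<forall>C \<in> F. \<forall>C' \<in> F. C \<noteq> C' \<longrightarrow> C \<inter> C' = {}) \<and> \<Union>F = A"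

text \<open>The dicycle intersection graph of F is simple iff any two distinct
  dicycles of F share at most one vertex.\<close>
definition simple_intersection_decomp :: "('a \<times> 'a) set \<Rightarrow> ('a \<times> 'a) set set \<Rightarrow> bool" where
  "simple_intersection_decomp A F \<longleftrightarrow> cycle_decomposition A F \<and>
     (\<forall>C \<in> F. \<forall>C' \<in> F. C \<noteq> C' \<longrightarrow> card (arc_verts C \<inter> arc_verts C') \<le> 1)"

definition admits_simple_dig :: "('a \<times> 'a) set \<Rightarrow> bool" where
  "admits_simple_dig A \<longleftrightarrow> (\<exists>F. simple_intersection_decomp A F)"

end

theory Submission
  imports Defs
begin

text \<open>Let F be a cycle decomposition whose dicycles pairwise share at most one vertex.
  Send each arc (u, w) to the pair (u, x), where x follows w on the dicycle C of F through (u, w).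
  Then x is a second out-neighbour of u: x \<noteq> u since there are no digons, and an arc (u, x)
  would lie on C (impossible: u has only one successor on C, and w \<noteq> x) or on another dicycle
  of F meeting C in both u and x. The map is injective for the same reason: two arcs leaving u
  and sent to the same x lie on dicycles through both u and x, hence on the same dicycle, where u
  has a unique successor. Counting both sides gives the inequality.\<close>

definition cycle_succ :: "('a \<times> 'a) set \<Rightarrow> 'a \<Rightarrow> 'a" where
  "cycle_succ C v = (THE w. (v, w) \<in> C)"

definition decomp_cycle :: "('a \<times> 'a) set set \<Rightarrow> 'a \<times> 'a \<Rightarrow> ('a \<times> 'a) set" where
  "decomp_cycle F e = (THE C. C \<in> F \<and> e \<in> C)"

definition skip_arc :: "('a \<times> 'a) set set \<Rightarrow> 'a \<times> 'a \<Rightarrow> 'a \<times> 'a" where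
  "skip_arc F e = (fst e, cycle_succ (decomp_cycle F e) (snd e))"

lemma dicycle_arcs_succ_unique:
  assumes "distinct vs" "(a, b) \<in> dicycle_arcs vs" "(a, b') \<in> dicycle_arcs vs"
  shows "b = b'"
proof -
  obtain i where i: "i < length vs" "a = vs ! i" "b = vs ! ((i + 1) mod length vs)"
    using assms(2) unfolding dicycle_arcs_def by auto
  obtain j where j: "j < length vs" "a = vs ! j" "b' = vs ! ((j + 1) mod length vs)"
    using assms(3) unfolding dicycle_arcs_def by auto
  have "i = j" using i j assms(1) nth_eq_iff_index_eq by metis
  then show ?thesis using i j by simp
qed

lemma dicycle_arcs_succ_exists:
  assumes "(a, b) \<in> dicycle_arcs vs"
  shows "\<exists>c. (b, c) \<in> dicycle_arcs vs"
proof -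
  obtain i where i: "i < length vs" "b = vs ! ((i + 1) mod length vs)"
    using assms unfolding dicycle_arcs_def by auto
  define j where "j = (i + 1) mod length vs"
  have "j < length vs" using i(1) unfolding j_def by (auto intro: mod_less_divisor)
  then have "(vs ! j, vs ! ((j + 1) mod length vs)) \<in> dicycle_arcs vs"
    unfolding dicycle_arcs_def by blast
  then show ?thesis using i(2) j_def by auto
qed

lemma cycle_succ_eq:
  assumes "is_dicycle A C" "(a, b) \<in> C"
  shows "cycle_succ C a = b"
proof -
  obtain vs where "distinct vs" "C = dicycle_arcs vs"
    using assms(1) unfolding is_dicycle_def by blast
  then show ?thesis
    unfolding cycle_succ_def using assms(2) dicycle_arcs_succ_unique by (metis the_equality)
qed

lemma cycle_succ_in:
  assumes "is_dicycle A C" "(a, b) \<in> C"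
  shows "(b, cycle_succ C b) \<in> C"
proof -
  obtain c where "(b, c) \<in> C"
    using assms dicycle_arcs_succ_exists unfolding is_dicycle_def by metis
  then show ?thesis using cycle_succ_eq[OF assms(1)] by simp
qed

lemma decomp_cycle:
  assumes "cycle_decomposition A F" "e \<in> A"
  shows "decomp_cycle F e \<in> F" "e \<in> decomp_cycle F e"
proof -
  obtain C where C: "C \<in> F" "e \<in> C"
    using assms unfolding cycle_decomposition_def by blast
  have "decomp_cycle F e = C"
    unfolding decomp_cycle_def
    using C assms(1) unfolding cycle_decomposition_def by (intro the_equality) auto
  then show "decomp_cycle F e \<in> F" "e \<in> decomp_cycle F e" using C by auto
qed

lemma arc_verts_fst: "(a, b) \<in> C \<Longrightarrow> a \<in> arc_verts C"
  and arc_verts_snd: "(a, b) \<in> C \<Longrightarrow> b \<in> arc_verts C"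
  unfolding arc_verts_def by force+

lemma simple_decomp_two_common_vertices:
  assumes "simple_intersection_decomp A F" "finite A" "C \<in> F" "C' \<in> F" "u \<noteq> x"
    and "{u, x} \<subseteq> arc_verts C \<inter> arc_verts C'"
  shows "C = C'"
proof (rule ccontr)
  assume "C \<noteq> C'"
  then have le1: "card (arc_verts C \<inter> arc_verts C') \<le> 1"
    using assms(1,3,4) unfolding simple_intersection_decomp_def by blast
  have "C \<subseteq> A"
    using assms(1,3) unfolding simple_intersection_decomp_def cycle_decomposition_def
      is_dicycle_def by blast
  then have "finite (arc_verts C \<inter> arc_verts C')"
    using assms(2) finite_subset unfolding arc_verts_def by blast
  then have "card {u, x} \<le> card (arc_verts C \<inter> arc_verts C')"
    using assms(6) by (rule card_mono)
  then show False using le1 assms(5) by simp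
qed

context
  fixes V :: "'a set" and A :: "('a \<times> 'a) set" and F :: "('a \<times> 'a) set set"
  assumes digraph: "digraph V A"
    and simple: "simple_intersection_decomp A F"
begin

private lemma decomp: "cycle_decomposition A F"
  using simple unfolding simple_intersection_decomp_def by blast

private lemma finite_arcs: "finite A"
  using digraph unfolding digraph_def by (auto intro: finite_subset[of A "V \<times> V"])

private lemma decomp_cycle_dicycle: "e \<in> A \<Longrightarrow> is_dicycle A (decomp_cycle F e)"
  using decomp_cycle(1)[OF decomp] decomp unfolding cycle_decomposition_def by blast

private lemma decomp_cycle_next_arc:
  assumes "(u, w) \<in> A"
  shows "decomp_cycle F (u, w) \<in> F" "(u, w) \<in> decomp_cycle F (u, w)"
    "(w, cycle_succ (decomp_cycle F (u, w)) w) \<in> decomp_cycle F (u, w)"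
    "(w, cycle_succ (decomp_cycle F (u, w)) w) \<in> A"
    "cycle_succ (decomp_cycle F (u, w)) w \<noteq> u"
proof -
  note C = decomp_cycle[OF decomp assms]
  show "decomp_cycle F (u, w) \<in> F" "(u, w) \<in> decomp_cycle F (u, w)" using C by auto
  show wx: "(w, cycle_succ (decomp_cycle F (u, w)) w) \<in> decomp_cycle F (u, w)"
    using cycle_succ_in[OF decomp_cycle_dicycle[OF assms] C(2)] .
  then show wxA: "(w, cycle_succ (decomp_cycle F (u, w)) w) \<in> A"
    using decomp_cycle_dicycle[OF assms] unfolding is_dicycle_def by blast
  show "cycle_succ (decomp_cycle F (u, w)) w \<noteq> u"
    using wxA digraph assms unfolding digraph_def by force
qed

private lemma skip_arc_in_second_out_nbrs_pair:
  assumes "(u, w) \<in> A"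
  shows "skip_arc F (u, w) \<in> Sigma V (second_out_nbrs A)"
proof -
  define C where "C = decomp_cycle F (u, w)"
  define x where "x = cycle_succ C w"
  note step = decomp_cycle_next_arc[OF assms, folded C_def, folded x_def]
  have "(u, x) \<notin> A"
  proof
    assume ux: "(u, x) \<in> A"
    define C' where "C' = decomp_cycle F (u, x)"
    have C': "C' \<in> F" "(u, x) \<in> C'" unfolding C'_def using decomp_cycle[OF decomp ux] by auto
    show False
    proof (cases "C' = C")
      case True
      then have "w = x"
        using cycle_succ_eq[OF decomp_cycle_dicycle[OF assms]] step(2) C'(2)
        unfolding C_def by metis
      then show False using step(4) digraph unfolding digraph_def by blast
    next
      case False
      have "{u, x} \<subseteq> arc_verts C' \<inter> arc_verts C"
        using C'(2) step(2,3) by (auto intro: arc_verts_fst arc_verts_snd)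
      then show False
        using simple_decomp_two_common_vertices[OF simple finite_arcs C'(1) step(1)]
          False step(5) by metis
    qed
  qed
  moreover have "u \<in> V" using assms digraph unfolding digraph_def by blast
  ultimately show ?thesis
    using assms step(4,5)
    unfolding skip_arc_def second_out_nbrs_def out_nbrs_def C_def x_def by auto
qed

lemma skip_arc_into_second_out_nbrs: "skip_arc F ` A \<subseteq> Sigma V (second_out_nbrs A)"
  using skip_arc_in_second_out_nbrs_pair by (intro image_subsetI) (metis prod.collapse)

private lemma skip_arc_same_target:
  assumes "(u, w) \<in> A" "(u, w') \<in> A"
    and "cycle_succ (decomp_cycle F (u, w)) w = cycle_succ (decomp_cycle F (u, w')) w'"
  shows "w = w'"
proof -
  define C where "C = decomp_cycle F (u, w)"
  define C' where "C' = decomp_cycle F (u, w')"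
  define x where "x = cycle_succ C w"
  note step = decomp_cycle_next_arc[OF assms(1), folded C_def, folded x_def]
  note step' = decomp_cycle_next_arc[OF assms(2), folded C'_def, folded assms(3)[folded C_def C'_def x_def]]
  have "{u, x} \<subseteq> arc_verts C \<inter> arc_verts C'"
    using step(2,3) step'(2,3) by (auto intro: arc_verts_fst arc_verts_snd)
  then have "C = C'"
    using simple_decomp_two_common_vertices[OF simple finite_arcs step(1) step'(1)] step(5)
    by metis
  then show "w = w'"
    using cycle_succ_eq[OF decomp_cycle_dicycle[OF assms(1)]] step(2) step'(2)
    unfolding C_def by metis
qed

lemma inj_on_skip_arc: "inj_on (skip_arc F) A"
  by (rule inj_onI) (auto simp: skip_arc_def dest: skip_arc_same_target)

end

lemma sum_card_out_nbrs:
  assumes "digraph V A"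
  shows "(\<Sum>v\<in>V. card (out_nbrs A v)) = card A"
proof -
  have "finite V" "\<And>v. out_nbrs A v \<subseteq> V"
    using assms unfolding digraph_def out_nbrs_def by blast+
  then have "(\<Sum>v\<in>V. card (out_nbrs A v)) = card (Sigma V (out_nbrs A))"
    by (intro card_SigmaI[symmetric]) (auto intro: finite_subset)
  also have "Sigma V (out_nbrs A) = A"
    using assms unfolding digraph_def out_nbrs_def by auto
  finally show ?thesis .
qed

lemma sum_card_second_out_nbrs:
  assumes "digraph V A"
  shows "(\<Sum>v\<in>V. card (second_out_nbrs A v)) = card (Sigma V (second_out_nbrs A))"
proof -
  have "finite V" "\<And>v. second_out_nbrs A v \<subseteq> V"
    using assms unfolding digraph_def second_out_nbrs_def by blast+
  then show ?thesis by (intro card_SigmaI[symmetric]) (auto intro: finite_subset)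
qed

theorem corollary2p2:
  fixes V :: "'a set" and A :: "('a \<times> 'a) set"
  assumes "digraph V A"
    and "eulerian V A"
    and "admits_simple_dig A"
  shows "(\<Sum>v\<in>V. card (second_out_nbrs A v)) \<ge> (\<Sum>v\<in>V. card (out_nbrs A v))"
proof -
  obtain F where F: "simple_intersection_decomp A F"
    using assms(3) unfolding admits_simple_dig_def by blast
  have "finite (Sigma V (second_out_nbrs A))"
    using assms(1) unfolding digraph_def second_out_nbrs_def
    by (auto intro: finite_subset[of _ "V \<times> V"])
  then have "card A \<le> card (Sigma V (second_out_nbrs A))"
    by (rule card_inj_on_le[OF inj_on_skip_arc[OF assms(1) F]
        skip_arc_into_second_out_nbrs[OF assms(1) F]])
  then show ?thesis
    using sum_card_out_nbrs[OF assms(1)] sum_card_second_out_nbrs[OF assms(1)] by simp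
qed

end
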